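(* Let $G$ be a connected graph with $n\geq 2$ vertices and $m$ edges. Then for every integer $k\geq 0$, $$R(S^k(G))=2^kR(G)+\frac{4^{k}-2^{k}}{2}R^+(G)+\frac{8^{k}-2\cdot 4^{k}+2^{k}}{4}R^*(G)+\frac{8^k-2^k}{12}m(2m-2n+1)-\frac{4^k-1}{6}(m-n)(m-n+1).$$
   Context: All graphs are finite, undirected, without loops or multiple edges. For a connected graph $H$ and vertices $i,j$, the resistance distance $\Omega_{ij}$ is the effective resistance between $i$ and $j$ in the electrical network obtained from $H$ by replacing each edge by a unit resistor. With $d_i$ the degree of vertex $i$ in $H$ and sums over unordered pairs of distinct vertices of $H$: $R(H)=\sum_{\{i,j\}\subseteq V(H)}\Omega_{ij}$ (Kirchhoff index), $R^+(H)=\sum_{\{i,j\}\subseteq V(H)}(d_i+d_j)\Omega_{ij}$ (additive degree-Kirchhoff index), and $R^*(H)=\sum_{\{i,j\}\subseteq V(H)}d_id_j\Omega_{ij}$ (multiplicative degree-Kirchhoff index). The subdivision $S(H)$ is the graph obtained from $H$ by replacing every edge with a path of length two. Iterated subdivisions: $S^0(G)=G$ and $S^k(G)=S(S^{k-1}(G))$ for $k\geq1$. *)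

theory Defs
  imports Complex_Main "HOL-Library.FSet"
begin

text \<open>Vertex type closed under subdivision: original vertices and
  subdivision vertices, the latter labelled by the (finite) edge they subdivide.\<close>
datatype 'a sv = Old 'a | Mid "'a sv fset"

definition graph :: "'a set \<Rightarrow> 'a set set \<Rightarrow> bool" where
  "graph V E \<longleftrightarrow> finite V \<and> (\<forall>e\<in>E. e \<subseteq> V \<and> card e = 2)"

definition adj :: "'a set set \<Rightarrow> 'a \<Rightarrow> 'a \<Rightarrow> bool" where
  "adj E u v \<longleftrightarrow> u \<noteq> v \<and> {u, v} \<in> E"

definition connected_graph :: "'a set \<Rightarrow> 'a set set \<Rightarrow> bool" where
  "connected_graph V E \<longleftrightarrow> graph V E \<and> V \<noteq> {} \<and>
     (\<forall>u\<in>V. \<forall>v\<in>V. (adj E)\<^sup>*\<^sup>* u v)"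

definition degree :: "'a set set \<Rightarrow> 'a \<Rightarrow> nat" where
  "degree E v = card {e \<in> E. v \<in> e}"

text \<open>Effective resistance with unit resistors: inject a unit current at i and
  extract it at j; the node potentials phi satisfy Kirchhoff's current law
  (net current out of v equals external injection at v), and the resistance is
  the potential difference phi i - phi j (independent of the choice of phi
  for a connected graph).\<close>
definition resistance :: "'a set \<Rightarrow> 'a set set \<Rightarrow> 'a \<Rightarrow> 'a \<Rightarrow> real" where
  "resistance V E i j = (THE r. \<exists>\<phi> :: 'a \<Rightarrow> real.
      (\<forall>v\<in>V. (\<Sum>u\<in>{u\<in>V. adj E v u}. \<phi> v - \<phi> u)
               = (if v = i then 1 else 0) - (if v = j then 1 else 0))
      \<and> r = \<phi> i - \<phi> j)"

text \<open>Sums over unordered pairs {i,j} of distinct vertices, written as half of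
  the sum over ordered pairs (all summands are symmetric in i, j).\<close>
definition kirchhoff :: "'a set \<Rightarrow> 'a set set \<Rightarrow> real" where
  "kirchhoff V E = (\<Sum>i\<in>V. \<Sum>j\<in>V - {i}. resistance V E i j) / 2"

definition add_deg_kirchhoff :: "'a set \<Rightarrow> 'a set set \<Rightarrow> real" where
  "add_deg_kirchhoff V E = (\<Sum>i\<in>V. \<Sum>j\<in>V - {i}.
      (real (degree E i) + real (degree E j)) * resistance V E i j) / 2"

definition mult_deg_kirchhoff :: "'a set \<Rightarrow> 'a set set \<Rightarrow> real" where
  "mult_deg_kirchhoff V E = (\<Sum>i\<in>V. \<Sum>j\<in>V - {i}.
      (real (degree E i) * real (degree E j)) * resistance V E i j) / 2"

definition subdiv :: "'a sv set \<times> 'a sv set set \<Rightarrow> 'a sv set \<times> 'a sv set set" where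
  "subdiv G = (fst G \<union> (\<lambda>e. Mid (Abs_fset e)) ` snd G,
               {{u, Mid (Abs_fset e)} | u e. e \<in> snd G \<and> u \<in> e})"

definition embed :: "'a set \<Rightarrow> 'a set set \<Rightarrow> 'a sv set \<times> 'a sv set set" where
  "embed V E = (Old ` V, (\<lambda>e. Old ` e) ` E)"

definition iter_subdiv :: "nat \<Rightarrow> 'a set \<Rightarrow> 'a set set \<Rightarrow> 'a sv set \<times> 'a sv set set" where
  "iter_subdiv k V E = (subdiv ^^ k) (embed V E)"

end

theory Submission
  imports Defs "Jordan_Normal_Form.Determinant"
begin

text \<open>Effective resistances are read off from solutions of the Poisson equation
  L \<phi> = c of a connected graph. A current pattern on S(G) pushes down to one on G (current
  entering at a subdivision vertex splits evenly between the ends of its edge), and a potential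
  on G lifts back to S(G) by doubling it on old vertices and averaging it at subdivision
  vertices. This expresses every resistance of S(G) through the resistance form of G, in which
  the resistances across edges of G enter only through Foster's theorem. Summing with weights 1
  and degrees yields linear recurrences for R, R+ and R* under one subdivision (where n and m
  become n + m and 2m), and iterating them k times gives the closed form.\<close>

section \<open>Linear algebra\<close>

lemma mat_mult_vec_solvable_if_kernel_trivial:
  fixes A :: "'a::field mat"
  assumes A: "A \<in> carrier_mat n n"
    and ker: "\<And>v. v \<in> carrier_vec n \<Longrightarrow> A *\<^sub>v v = 0\<^sub>v n \<Longrightarrow> v = 0\<^sub>v n"
    and b: "b \<in> carrier_vec n"
  shows "\<exists>y\<in>carrier_vec n. A *\<^sub>v y = b"
proof -
  have "det A \<noteq> 0"
    using ker det_0_iff_vec_prod_zero_field[OF A] by blast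
  then obtain B where B: "B \<in> carrier_mat n n" "A * B = 1\<^sub>m n"
    using det_non_zero_imp_unit[OF A, where b="()"] unfolding Units_def ring_mat_def by auto
  have "A *\<^sub>v (B *\<^sub>v b) = b"
    using assoc_mult_mat_vec[OF A B(1) b] B(2) b by simp
  moreover have "B *\<^sub>v b \<in> carrier_vec n"
    using B(1) b by simp
  ultimately show ?thesis by blast
qed

lemma mat_mult_vec_reindex:
  assumes f: "bij_betw f {0..<n} V" and "v \<in> V" "dim_vec y = n"
  defines "g \<equiv> inv_into {0..<n} f"
  shows "(mat n n (\<lambda>(i, j). c (f i) (f j)) *\<^sub>v y) $ g v = (\<Sum>u\<in>V. c v u * y $ g u)"
proof -
  have "g v < n" "f (g v) = v"
    using assms bij_betw_inv_into_right[OF f] bij_betwE[OF bij_betw_inv_into[OF f]] by auto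
  then have "(mat n n (\<lambda>(i, j). c (f i) (f j)) *\<^sub>v y) $ g v = (\<Sum>i\<in>{0..<n}. c v (f i) * y $ i)"
    using assms(3) by (simp add: scalar_prod_def)
  also have "\<dots> = (\<Sum>i\<in>{0..<n}. c v (f i) * y $ g (f i))"
    unfolding g_def using f bij_betw_inv_into_left by (intro sum.cong) fastforce+
  also have "\<dots> = (\<Sum>u\<in>V. c v u * y $ g u)"
    by (rule sum.reindex_bij_betw[OF f])
  finally show ?thesis .
qed

lemma linear_system_solvable_if_injective:
  fixes c :: "'a \<Rightarrow> 'a \<Rightarrow> 'b::field"
  assumes fin: "finite V"
    and inj: "\<And>x. \<forall>v\<in>V. (\<Sum>u\<in>V. c v u * x u) = 0 \<Longrightarrow> \<forall>v\<in>V. x v = 0"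
  shows "\<exists>x. \<forall>v\<in>V. (\<Sum>u\<in>V. c v u * x u) = b v"
proof -
  define n where "n = card V"
  obtain f where f: "bij_betw f {0..<n} V"
    using ex_bij_betw_nat_finite[OF fin] unfolding n_def by blast
  define g where "g = inv_into {0..<n} f"
  have g: "g v < n" "f (g v) = v" if "v \<in> V" for v
    unfolding g_def using that bij_betw_inv_into_right[OF f] bij_betwE[OF bij_betw_inv_into[OF f]]
    by auto
  have f_in: "f i \<in> V" "g (f i) = i" if "i < n" for i
    unfolding g_def using that f bij_betwE bij_betw_inv_into_left by fastforce+
  define A where "A = mat n n (\<lambda>(i, j). c (f i) (f j))"
  have A_mult: "(A *\<^sub>v y) $ g v = (\<Sum>u\<in>V. c v u * y $ g u)" if "v \<in> V" "dim_vec y = n" for y v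
    unfolding A_def g_def using mat_mult_vec_reindex[OF f that] .
  have "\<exists>y\<in>carrier_vec n. A *\<^sub>v y = vec n (\<lambda>i. b (f i))"
  proof (rule mat_mult_vec_solvable_if_kernel_trivial)
    fix y :: "'b vec" assume y: "y \<in> carrier_vec n" "A *\<^sub>v y = 0\<^sub>v n"
    have "(\<Sum>u\<in>V. c v u * y $ g u) = 0" if "v \<in> V" for v
      using A_mult[OF that carrier_vecD[OF y(1)]] y(2) g(1)[OF that] by simp
    then have "\<forall>v\<in>V. y $ g v = 0"
      using inj[of "\<lambda>u. y $ g u"] by simp
    then show "y = 0\<^sub>v n"
      using y(1) f_in by (intro eq_vecI) (auto, metis)
  qed (simp_all add: A_def)
  then obtain y where y: "y \<in> carrier_vec n" "A *\<^sub>v y = vec n (\<lambda>i. b (f i))"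
    by blast
  have "(\<Sum>u\<in>V. c v u * y $ g u) = b v" if "v \<in> V" for v
    using A_mult[OF that carrier_vecD[OF y(1)]] y(2) g[OF that] by simp
  then show ?thesis
    by (intro exI[of _ "\<lambda>u. y $ g u"]) simp
qed

lemma double_sum_separable_eq_0:
  fixes c f g :: "'a \<Rightarrow> 'b::comm_ring"
  assumes "(\<Sum>x\<in>A. c x) = 0"
  shows "(\<Sum>x\<in>A. \<Sum>y\<in>A. c x * c y * (f x + g y)) = 0"
proof -
  have "(\<Sum>x\<in>A. \<Sum>y\<in>A. c x * c y * (f x + g y))
      = (\<Sum>x\<in>A. \<Sum>y\<in>A. (c x * f x) * c y) + (\<Sum>x\<in>A. \<Sum>y\<in>A. c x * (c y * g y))"
    by (simp add: sum.distrib[symmetric] algebra_simps)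
  also have "\<dots> = (\<Sum>x\<in>A. c x * f x) * (\<Sum>y\<in>A. c y) + (\<Sum>x\<in>A. c x) * (\<Sum>y\<in>A. c y * g y)"
    by (simp only: sum_product)
  finally show ?thesis
    using assms by simp
qed

section \<open>Laplacian and effective resistance\<close>

definition neighbours :: "'a set \<Rightarrow> 'a set set \<Rightarrow> 'a \<Rightarrow> 'a set" where
  "neighbours V E v = {u \<in> V. adj E v u}"

definition laplacian :: "'a set \<Rightarrow> 'a set set \<Rightarrow> ('a \<Rightarrow> real) \<Rightarrow> 'a \<Rightarrow> real" where
  "laplacian V E \<phi> v = (\<Sum>u\<in>neighbours V E v. \<phi> v - \<phi> u)"

lemma adj_commute: "adj E u v \<longleftrightarrow> adj E v u"
  unfolding adj_def by (auto simp: insert_commute)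

locale network =
  fixes V :: "'a set" and E :: "'a set set"
  assumes connected: "connected_graph V E"
begin

abbreviation "N \<equiv> neighbours V E"
abbreviation "L \<equiv> laplacian V E"
abbreviation "\<Omega> \<equiv> resistance V E"

lemma finite_V: "finite V"
  using connected unfolding connected_graph_def graph_def by auto

lemma V_nonempty: "V \<noteq> {}"
  using connected unfolding connected_graph_def by auto

lemma reachable: "u \<in> V \<Longrightarrow> v \<in> V \<Longrightarrow> (adj E)\<^sup>*\<^sup>* u v"
  using connected unfolding connected_graph_def by auto

lemma edge_subset: "e \<in> E \<Longrightarrow> e \<subseteq> V"
  using connected unfolding connected_graph_def graph_def by auto

lemma card_edge: "e \<in> E \<Longrightarrow> card e = 2"
  using connected unfolding connected_graph_def graph_def by auto

lemma finite_edge: "e \<in> E \<Longrightarrow> finite e"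
  using edge_subset finite_V finite_subset by blast

lemma finite_E: "finite E"
proof -
  have "E \<subseteq> Pow V"
    using edge_subset by auto
  then show ?thesis
    using finite_V finite_subset by blast
qed

lemma finite_neighbours: "finite (N v)"
  unfolding neighbours_def using finite_V by auto

lemma neighbours_subset: "N v \<subseteq> V"
  unfolding neighbours_def by auto

lemma adj_in_V: "adj E u v \<Longrightarrow> u \<in> V \<and> v \<in> V"
  unfolding adj_def using edge_subset by auto

lemma sum_neighbours_swap: "(\<Sum>v\<in>V. \<Sum>u\<in>N v. f v u) = (\<Sum>v\<in>V. \<Sum>u\<in>N v. f u v)"
proof -
  have "(\<Sum>v\<in>V. \<Sum>u\<in>N v. f v u) = (\<Sum>u\<in>V. \<Sum>v\<in>{v\<in>V. adj E v u}. f v u)"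
    unfolding neighbours_def by (rule sum.swap_restrict[OF finite_V finite_V])
  also have "\<dots> = (\<Sum>v\<in>V. \<Sum>u\<in>N v. f u v)"
    unfolding neighbours_def by (simp only: adj_commute)
  finally show ?thesis .
qed

lemma sum_laplacian: "(\<Sum>v\<in>V. L \<phi> v) = 0"
proof -
  have "(\<Sum>v\<in>V. L \<phi> v) = (\<Sum>v\<in>V. \<Sum>u\<in>N v. \<phi> u - \<phi> v)"
    unfolding laplacian_def by (rule sum_neighbours_swap)
  also have "\<dots> = - (\<Sum>v\<in>V. L \<phi> v)"
    unfolding laplacian_def by (simp add: sum_negf[symmetric])
  finally show ?thesis by simp
qed

lemma laplacian_diff: "L (\<lambda>x. f x - g x) v = L f v - L g v"
  unfolding laplacian_def by (simp add: sum_subtractf[symmetric] algebra_simps)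

lemma laplacian_sum: "L (\<lambda>x. \<Sum>y\<in>A. a y * f y x) v = (\<Sum>y\<in>A. a y * L (f y) v)"
proof -
  have "L (\<lambda>x. \<Sum>y\<in>A. a y * f y x) v = (\<Sum>u\<in>N v. \<Sum>y\<in>A. a y * (f y v - f y u))"
    unfolding laplacian_def by (simp add: sum_subtractf[symmetric] right_diff_distrib)
  also have "\<dots> = (\<Sum>y\<in>A. a y * L (f y) v)"
    unfolding laplacian_def by (subst sum.swap) (simp add: sum_distrib_left)
  finally show ?thesis .
qed

text \<open>Maximum principle: where a harmonic function attains its maximum, it attains it at
  all neighbours too, hence everywhere by connectivity.\<close>
lemma harmonic_imp_const:
  assumes harmonic: "\<forall>v\<in>V. L \<phi> v = 0" and "u \<in> V" "w \<in> V"
  shows "\<phi> u = \<phi> w"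
proof -
  define M where "M = Max (\<phi> ` V)"
  have "M \<in> \<phi> ` V"
    unfolding M_def using finite_V V_nonempty by simp
  then obtain v0 where v0: "v0 \<in> V" "\<phi> v0 = M"
    by blast
  have le_M: "\<phi> x \<le> M" if "x \<in> V" for x
    unfolding M_def using finite_V that by auto
  have max_step: "\<phi> z = M" if "y \<in> V" "\<phi> y = M" "adj E y z" for y z
  proof -
    have "(\<Sum>u\<in>N y. \<phi> y - \<phi> u) = 0"
      using harmonic that(1) unfolding laplacian_def by simp
    moreover have "(\<Sum>u\<in>N y. \<phi> y - \<phi> u) = 0 \<longleftrightarrow> (\<forall>u\<in>N y. \<phi> y - \<phi> u = 0)"
      using le_M neighbours_subset \<open>\<phi> y = M\<close>
      by (intro sum_nonneg_eq_0_iff[OF finite_neighbours]) auto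
    ultimately have "\<forall>u\<in>N y. \<phi> y - \<phi> u = 0"
      by blast
    moreover have "z \<in> N y"
      using that(3) adj_in_V unfolding neighbours_def by auto
    ultimately have "\<phi> y - \<phi> z = 0"
      by blast
    with that(2) show ?thesis by simp
  qed
  have max_everywhere: "\<phi> x = M" if "x \<in> V" for x
  proof -
    have "(adj E)\<^sup>*\<^sup>* v0 x"
      using reachable v0(1) that by blast
    then have "x \<in> V \<and> \<phi> x = M"
    proof (induction rule: rtranclp_induct)
      case (step y z)
      then show ?case using max_step[of y z] adj_in_V[of y z] by simp
    qed (use v0 in simp)
    then show ?thesis by simp
  qed
  show ?thesis
    using max_everywhere assms(2,3) by simp
qed

lemma harmonic_sum_eq_0_imp_0:
  assumes "\<forall>v\<in>V. L \<phi> v = 0" "(\<Sum>u\<in>V. \<phi> u) = 0" "v \<in> V"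
  shows "\<phi> v = 0"
proof -
  have "(\<Sum>u\<in>V. \<phi> u) = real (card V) * \<phi> v"
    using harmonic_imp_const[OF assms(1) _ assms(3)] by simp
  with assms(2,3) finite_V show ?thesis
    by auto
qed

lemma laplacian_eq_matrix:
  assumes "v \<in> V"
  shows "L \<phi> v = (\<Sum>u\<in>V. ((if u = v then real (card (N v)) else 0) - (if adj E v u then 1 else 0)) * \<phi> u)"
proof -
  have "(\<Sum>u\<in>V. ((if u = v then real (card (N v)) else 0) - (if adj E v u then 1 else 0)) * \<phi> u)
      = (\<Sum>u\<in>V. if u = v then real (card (N v)) * \<phi> v else 0) - (\<Sum>u\<in>V. if adj E v u then \<phi> u else 0)"
    by (subst sum_subtractf[symmetric], rule sum.cong) (auto simp: adj_def)
  also have "\<dots> = real (card (N v)) * \<phi> v - (\<Sum>u\<in>N v. \<phi> u)"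
    using assms finite_V unfolding neighbours_def by (simp add: sum.inter_filter)
  also have "\<dots> = L \<phi> v"
    unfolding laplacian_def by (simp add: sum_subtractf)
  finally show ?thesis by simp
qed

text \<open>The matrix of the Laplacian plus the all-ones matrix is nonsingular, since its
  kernel consists of constant functions with zero sum.\<close>
lemma poisson_solvable:
  assumes "(\<Sum>v\<in>V. c v) = 0"
  shows "\<exists>\<phi>. \<forall>v\<in>V. L \<phi> v = c v"
proof -
  define C where
    "C v u = (if u = v then real (card (N v)) else 0) - (if adj E v u then 1 else 0) + 1" for v u
  have C: "(\<Sum>u\<in>V. C v u * x u) = L x v + (\<Sum>u\<in>V. x u)" if "v \<in> V" for v x
    unfolding C_def laplacian_eq_matrix[OF that] by (simp add: distrib_right sum.distrib)
  have sum_zero: "(\<Sum>u\<in>V. x u) = 0" if "(\<Sum>v\<in>V. \<Sum>u\<in>V. C v u * x u) = 0" for x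
  proof -
    have "(\<Sum>v\<in>V. \<Sum>u\<in>V. C v u * x u) = (\<Sum>v\<in>V. L x v + (\<Sum>u\<in>V. x u))"
      using C by (intro sum.cong) simp_all
    also have "\<dots> = real (card V) * (\<Sum>u\<in>V. x u)"
      by (simp add: sum.distrib sum_laplacian)
    finally show ?thesis
      using that finite_V V_nonempty by simp
  qed
  have "\<exists>x. \<forall>v\<in>V. (\<Sum>u\<in>V. C v u * x u) = c v"
  proof (rule linear_system_solvable_if_injective[OF finite_V])
    fix x assume x: "\<forall>v\<in>V. (\<Sum>u\<in>V. C v u * x u) = 0"
    have x_sum: "(\<Sum>u\<in>V. x u) = 0"
      by (rule sum_zero) (use x in simp)
    have "\<forall>v\<in>V. L x v = 0"
      using x C x_sum by simp
    with x_sum show "\<forall>v\<in>V. x v = 0"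
      using harmonic_sum_eq_0_imp_0 by blast
  qed
  then obtain x where x: "\<forall>v\<in>V. (\<Sum>u\<in>V. C v u * x u) = c v"
    by blast
  have "(\<Sum>u\<in>V. x u) = 0"
    by (rule sum_zero) (use x assms in simp)
  with x C show ?thesis
    by (intro exI[of _ x]) simp
qed

lemma resistance_eqI:
  assumes "i \<in> V" "j \<in> V"
    and \<phi>: "\<forall>v\<in>V. L \<phi> v = (if v = i then 1 else 0) - (if v = j then 1 else 0)"
  shows "\<Omega> i j = \<phi> i - \<phi> j"
  unfolding resistance_def
proof (rule the_equality)
  show "\<exists>\<phi>'. (\<forall>v\<in>V. (\<Sum>u\<in>{u \<in> V. adj E v u}. \<phi>' v - \<phi>' u)
      = (if v = i then 1 else 0) - (if v = j then 1 else 0)) \<and> \<phi> i - \<phi> j = \<phi>' i - \<phi>' j"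
    using \<phi> unfolding laplacian_def neighbours_def by (intro exI[of _ \<phi>]) simp
next
  fix r :: real assume "\<exists>\<phi>'. (\<forall>v\<in>V. (\<Sum>u\<in>{u \<in> V. adj E v u}. \<phi>' v - \<phi>' u)
      = (if v = i then 1 else 0) - (if v = j then 1 else 0)) \<and> r = \<phi>' i - \<phi>' j"
  then obtain \<phi>' where \<phi>': "\<forall>v\<in>V. L \<phi>' v = (if v = i then 1 else 0) - (if v = j then 1 else 0)"
    and r: "r = \<phi>' i - \<phi>' j"
    unfolding laplacian_def neighbours_def by blast
  have "\<forall>v\<in>V. L (\<lambda>x. \<phi>' x - \<phi> x) v = 0"
    using \<phi> \<phi>' laplacian_diff by simp
  then have "\<phi>' i - \<phi> i = \<phi>' j - \<phi> j"
    using harmonic_imp_const assms(1,2) by blast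
  with r show "r = \<phi> i - \<phi> j" by simp
qed

definition potential :: "'a \<Rightarrow> 'a \<Rightarrow> 'a \<Rightarrow> real" where
  "potential g y = (SOME \<phi>. \<forall>v\<in>V. L \<phi> v = (if v = y then 1 else 0) - (if v = g then 1 else 0))"

lemma laplacian_potential:
  assumes "g \<in> V" "y \<in> V" "v \<in> V"
  shows "L (potential g y) v = (if v = y then 1 else 0) - (if v = g then 1 else 0)"
proof -
  have "(\<Sum>v\<in>V. (if v = y then 1 else 0) - (if v = g then 1 else 0) :: real) = 0"
    using assms finite_V by (simp add: sum_subtractf)
  from someI_ex[OF poisson_solvable[OF this]] show ?thesis
    using assms(3) unfolding potential_def by blast
qed

lemma resistance_potential:
  assumes "g \<in> V" "x \<in> V" "y \<in> V"
  shows "\<Omega> x y = potential g x x - potential g y x - potential g x y + potential g y y"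
  using resistance_eqI[of x y "\<lambda>z. potential g x z - potential g y z"]
    laplacian_potential laplacian_diff assms by simp

lemma resistance_self: "x \<in> V \<Longrightarrow> \<Omega> x x = 0"
  using resistance_eqI[of x x "\<lambda>_. 0"] unfolding laplacian_def by simp

lemma resistance_commute: "x \<in> V \<Longrightarrow> y \<in> V \<Longrightarrow> \<Omega> x y = \<Omega> y x"
  using resistance_potential[of x x y] resistance_potential[of x y x] by simp

section \<open>Resistance forms and Foster's theorem\<close>

abbreviation "deg v \<equiv> real (Defs.degree E v)"

definition resistance_form :: "('a \<Rightarrow> real) \<Rightarrow> ('a \<Rightarrow> real) \<Rightarrow> real" where
  "resistance_form f g = (\<Sum>x\<in>V. \<Sum>y\<in>V. f x * g y * \<Omega> x y)"

lemma resistance_form_commute: "resistance_form f g = resistance_form g f"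
  unfolding resistance_form_def
  by (subst sum.swap) (simp add: resistance_commute mult.commute cong: sum.cong)

lemma resistance_form_cong:
  "(\<And>x. x \<in> V \<Longrightarrow> f x = f' x) \<Longrightarrow> (\<And>x. x \<in> V \<Longrightarrow> g x = g' x)
    \<Longrightarrow> resistance_form f g = resistance_form f' g'"
  unfolding resistance_form_def by simp

lemma resistance_form_diff:
  "resistance_form (\<lambda>x. f x - g x) (\<lambda>x. f x - g x)
    = resistance_form f f - 2 * resistance_form f g + resistance_form g g"
proof -
  have "resistance_form (\<lambda>x. f x - g x) (\<lambda>x. f x - g x)
      = resistance_form f f - resistance_form f g - resistance_form g f + resistance_form g g"
    unfolding resistance_form_def by (simp add: algebra_simps sum_subtractf sum.distrib)
  then show ?thesis
    using resistance_form_commute[of g f] by simp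
qed

lemma resistance_form_affine:
  "resistance_form (\<lambda>x. a + b * h x) (\<lambda>y. c + d * h y)
    = a * c * resistance_form (\<lambda>_. 1) (\<lambda>_. 1) + (a * d + b * c) * resistance_form h (\<lambda>_. 1)
      + b * d * resistance_form h h"
proof -
  have "resistance_form (\<lambda>x. a + b * h x) (\<lambda>y. c + d * h y)
      = a * c * resistance_form (\<lambda>_. 1) (\<lambda>_. 1) + a * d * resistance_form (\<lambda>_. 1) h
        + b * c * resistance_form h (\<lambda>_. 1) + b * d * resistance_form h h"
    unfolding resistance_form_def
    by (simp add: algebra_simps sum.distrib sum_distrib_left)
  then show ?thesis
    using resistance_form_commute[of "\<lambda>_. 1" h] by (simp add: algebra_simps)
qed

lemma resistance_form_sum:
  "resistance_form (\<lambda>x. \<Sum>p\<in>P. a p * f p x) (\<lambda>y. \<Sum>q\<in>Q. b q * g q y)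
    = (\<Sum>p\<in>P. \<Sum>q\<in>Q. a p * b q * resistance_form (f p) (g q))"
proof -
  have "resistance_form (\<lambda>x. \<Sum>p\<in>P. a p * f p x) (\<lambda>y. \<Sum>q\<in>Q. b q * g q y)
      = (\<Sum>x\<in>V. \<Sum>y\<in>V. \<Sum>p\<in>P. \<Sum>q\<in>Q. a p * b q * (f p x * g q y * \<Omega> x y))"
    unfolding resistance_form_def
  proof (intro sum.cong refl)
    fix x y
    have "(\<Sum>p\<in>P. a p * f p x) * (\<Sum>q\<in>Q. b q * g q y) * \<Omega> x y
        = (\<Sum>p\<in>P. \<Sum>q\<in>Q. (a p * f p x) * (b q * g q y) * \<Omega> x y)"
      by (simp only: sum_distrib_left sum_distrib_right) (rule sum.swap)
    then show "(\<Sum>p\<in>P. a p * f p x) * (\<Sum>q\<in>Q. b q * g q y) * \<Omega> x y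
        = (\<Sum>p\<in>P. \<Sum>q\<in>Q. a p * b q * (f p x * g q y * \<Omega> x y))"
      by (simp add: mult_ac)
  qed
  also have "\<dots> = (\<Sum>p\<in>P. \<Sum>q\<in>Q. \<Sum>x\<in>V. \<Sum>y\<in>V. a p * b q * (f p x * g q y * \<Omega> x y))"
    by (subst (2) sum.swap, subst sum.swap, simp only: sum.swap[of _ Q])
  also have "\<dots> = (\<Sum>p\<in>P. \<Sum>q\<in>Q. a p * b q * resistance_form (f p) (g q))"
    unfolding resistance_form_def by (simp add: sum_distrib_left)
  finally show ?thesis .
qed

lemma laplacian_superposition:
  assumes "g \<in> V" "(\<Sum>v\<in>V. c v) = 0" "v \<in> V"
  shows "L (\<lambda>x. \<Sum>y\<in>V. c y * potential g y x) v = c v"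
proof -
  have "L (\<lambda>x. \<Sum>y\<in>V. c y * potential g y x) v
      = (\<Sum>y\<in>V. c y * ((if v = y then 1 else 0) - (if v = g then 1 else 0)))"
    unfolding laplacian_sum using assms laplacian_potential by (intro sum.cong) simp_all
  also have "\<dots> = (\<Sum>y\<in>V. if v = y then c y else 0) - (\<Sum>y\<in>V. c y) * (if v = g then 1 else 0)"
    by (simp add: sum_subtractf[symmetric] sum_distrib_right right_diff_distrib if_distrib[of "\<lambda>z. _ * z"]
        cong: if_cong)
  also have "\<dots> = c v"
    using assms finite_V by simp
  finally show ?thesis .
qed

lemma potential_energy:
  assumes c: "(\<Sum>v\<in>V. c v) = 0" and \<phi>: "\<forall>v\<in>V. L \<phi> v = c v"
  shows "(\<Sum>x\<in>V. c x * \<phi> x) = - resistance_form c c / 2"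
proof -
  obtain g where g: "g \<in> V"
    using V_nonempty by blast
  define P where "P = potential g"
  define \<chi> where "\<chi> x = (\<Sum>y\<in>V. c y * P y x)" for x
  have "L \<chi> v = c v" if "v \<in> V" for v
    unfolding \<chi>_def P_def using laplacian_superposition[OF g c that] .
  with \<phi> have "\<forall>v\<in>V. L (\<lambda>x. \<phi> x - \<chi> x) v = 0"
    by (simp add: laplacian_diff)
  then have "\<phi> x = \<chi> x + (\<phi> g - \<chi> g)" if "x \<in> V" for x
    using harmonic_imp_const[OF _ that g, of "\<lambda>x. \<phi> x - \<chi> x"] by simp
  then have "(\<Sum>x\<in>V. c x * \<phi> x) = (\<Sum>x\<in>V. c x * \<chi> x) + (\<Sum>x\<in>V. c x) * (\<phi> g - \<chi> g)"
    by (simp add: distrib_left sum.distrib sum_distrib_right)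
  also have "\<dots> = (\<Sum>x\<in>V. \<Sum>y\<in>V. c x * c y * P y x)"
    unfolding \<chi>_def c by (simp add: sum_distrib_left mult.assoc)
  finally have lhs: "(\<Sum>x\<in>V. c x * \<phi> x) = (\<Sum>x\<in>V. \<Sum>y\<in>V. c x * c y * P y x)" .
  have "(\<Sum>x\<in>V. \<Sum>y\<in>V. c x * c y * \<Omega> x y)
      = (\<Sum>x\<in>V. \<Sum>y\<in>V. c x * c y * (P x x + P y y))
        - (\<Sum>x\<in>V. \<Sum>y\<in>V. c x * c y * P y x) - (\<Sum>x\<in>V. \<Sum>y\<in>V. c x * c y * P x y)"
    by (simp add: resistance_potential[OF g] P_def algebra_simps sum_subtractf sum.distrib)
  also have "(\<Sum>x\<in>V. \<Sum>y\<in>V. c x * c y * P x y) = (\<Sum>x\<in>V. \<Sum>y\<in>V. c x * c y * P y x)"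
    by (subst sum.swap) (simp add: mult.commute)
  finally show ?thesis
    using double_sum_separable_eq_0[OF c] lhs unfolding resistance_form_def by (simp add: mult.assoc)
qed

lemma sum_edges_swap: "(\<Sum>e\<in>E. \<Sum>x\<in>e. g x e) = (\<Sum>x\<in>V. \<Sum>e\<in>{e\<in>E. x \<in> e}. g x e)"
proof -
  have "(\<Sum>e\<in>E. \<Sum>x\<in>e. g x e) = (\<Sum>e\<in>E. \<Sum>x\<in>{x\<in>V. x \<in> e}. g x e)"
  proof (rule sum.cong[OF refl])
    fix e assume "e \<in> E"
    then have "{x\<in>V. x \<in> e} = e"
      using edge_subset by blast
    then show "(\<Sum>x\<in>e. g x e) = (\<Sum>x\<in>{x\<in>V. x \<in> e}. g x e)"
      by simp
  qed
  also have "\<dots> = (\<Sum>x\<in>V. \<Sum>e\<in>{e\<in>E. x \<in> e}. g x e)"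
    by (rule sum.swap_restrict[OF finite_E finite_V])
  finally show ?thesis .
qed

lemma bij_betw_neighbours_incident_edges:
  assumes "x \<in> V"
  shows "bij_betw (\<lambda>u. {x, u}) (N x) {e\<in>E. x \<in> e}"
proof (rule bij_betw_imageI)
  show "inj_on (\<lambda>u. {x, u}) (N x)"
    by (rule inj_onI) (metis doubleton_eq_iff)
  show "(\<lambda>u. {x, u}) ` N x = {e\<in>E. x \<in> e}"
  proof
    show "(\<lambda>u. {x, u}) ` N x \<subseteq> {e\<in>E. x \<in> e}"
      unfolding neighbours_def adj_def by auto
    show "{e\<in>E. x \<in> e} \<subseteq> (\<lambda>u. {x, u}) ` N x"
    proof
      fix e assume e: "e \<in> {e\<in>E. x \<in> e}"
      then have "card e = 2"
        using card_edge by blast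
      then obtain a b where ab: "e = {a, b}" "a \<noteq> b"
        unfolding card_2_iff by blast
      define u where "u = (if a = x then b else a)"
      have "e = {x, u}" "u \<noteq> x"
        using ab e unfolding u_def by auto
      moreover have "u \<in> V"
        using edge_subset e \<open>e = {x, u}\<close> by auto
      ultimately show "e \<in> (\<lambda>u. {x, u}) ` N x"
        using e unfolding neighbours_def adj_def by auto
    qed
  qed
qed

lemma degree_eq_card_neighbours: "x \<in> V \<Longrightarrow> Defs.degree E x = card (N x)"
  unfolding Defs.degree_def using bij_betw_same_card[OF bij_betw_neighbours_incident_edges] by simp

lemma sum_incident_edges:
  "x \<in> V \<Longrightarrow> (\<Sum>e\<in>{e\<in>E. x \<in> e}. h e) = (\<Sum>u\<in>N x. h {x, u})"
  using sum.reindex_bij_betw[OF bij_betw_neighbours_incident_edges, of x h] by simp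

lemma sum_degree: "(\<Sum>v\<in>V. real (Defs.degree E v)) = 2 * real (card E)"
proof -
  have "(\<Sum>v\<in>V. real (Defs.degree E v)) = (\<Sum>e\<in>E. \<Sum>x\<in>e. 1)"
    unfolding Defs.degree_def sum_edges_swap by simp
  also have "\<dots> = 2 * real (card E)"
    using card_edge by simp
  finally show ?thesis .
qed

text \<open>Foster's theorem; each edge is counted twice on the left.\<close>
lemma foster:
  "(\<Sum>e\<in>E. \<Sum>x\<in>e. \<Sum>y\<in>e. \<Omega> x y) = 2 * (real (card V) - 1)"
proof -
  obtain g where g: "g \<in> V"
    using V_nonempty by blast
  define P where "P = potential g"
  have "(\<Sum>v\<in>V. \<Sum>u\<in>N v. P v v - P v u) = (\<Sum>v\<in>V. L (P v) v)"
    unfolding laplacian_def ..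
  also have "\<dots> = (\<Sum>v\<in>V. 1 - (if v = g then 1 else 0))"
    using g laplacian_potential unfolding P_def by (intro sum.cong) auto
  also have "\<dots> = real (card V) - 1"
    using g finite_V by (simp add: sum_subtractf)
  finally have half: "(\<Sum>v\<in>V. \<Sum>u\<in>N v. P v v - P v u) = real (card V) - 1" .
  have "(\<Sum>e\<in>E. \<Sum>x\<in>e. \<Sum>y\<in>e. \<Omega> x y) = (\<Sum>x\<in>V. \<Sum>u\<in>N x. \<Sum>y\<in>{x, u}. \<Omega> x y)"
    unfolding sum_edges_swap by (intro sum.cong[OF refl] sum_incident_edges)
  also have "\<dots> = (\<Sum>x\<in>V. \<Sum>u\<in>N x. (P x x - P x u) + (P u u - P u x))"
    using neighbours_subset resistance_self
    by (intro sum.cong refl) (auto simp: neighbours_def adj_def resistance_potential[OF g] P_def)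
  also have "\<dots> = 2 * (real (card V) - 1)"
    using half sum_neighbours_swap[of "\<lambda>x u. P x x - P x u"] by (simp add: sum.distrib)
  finally show ?thesis .
qed

lemma sum_off_diagonal:
  "(\<Sum>i\<in>V. \<Sum>j\<in>V - {i}. w i j * \<Omega> i j) = (\<Sum>i\<in>V. \<Sum>j\<in>V. w i j * \<Omega> i j)"
proof (rule sum.cong[OF refl])
  fix i assume "i \<in> V"
  then show "(\<Sum>j\<in>V - {i}. w i j * \<Omega> i j) = (\<Sum>j\<in>V. w i j * \<Omega> i j)"
    using sum.remove[OF finite_V, of i "\<lambda>j. w i j * \<Omega> i j"] resistance_self by simp
qed

lemma kirchhoff_eq_form: "kirchhoff V E = resistance_form (\<lambda>_. 1) (\<lambda>_. 1) / 2"
  using sum_off_diagonal[of "\<lambda>_ _. 1"] unfolding kirchhoff_def resistance_form_def by simp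

lemma add_deg_kirchhoff_eq_form: "add_deg_kirchhoff V E = resistance_form deg (\<lambda>_. 1)"
proof -
  have "add_deg_kirchhoff V E = (resistance_form deg (\<lambda>_. 1) + resistance_form (\<lambda>_. 1) deg) / 2"
    using sum_off_diagonal unfolding add_deg_kirchhoff_def resistance_form_def
    by (simp add: distrib_right sum.distrib)
  then show ?thesis
    using resistance_form_commute[of deg] by simp
qed

lemma mult_deg_kirchhoff_eq_form: "mult_deg_kirchhoff V E = resistance_form deg deg / 2"
  using sum_off_diagonal unfolding mult_deg_kirchhoff_def resistance_form_def by simp

end

section \<open>Renaming vertices\<close>

locale network_renaming = network V E for V :: "'a set" and E +
  fixes f :: "'a \<Rightarrow> 'b"
  assumes inj: "inj f"
begin

abbreviation "Vf \<equiv> f ` V"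
abbreviation "Ef \<equiv> (\<lambda>e. f ` e) ` E"

lemma inj_on_edges: "inj_on (\<lambda>e. f ` e) A"
  using inj by (auto intro: inj_onI simp: inj_image_eq_iff)

lemma adj_image: "adj Ef (f u) (f v) \<longleftrightarrow> adj E u v"
proof -
  have "{f u, f v} \<in> Ef \<longleftrightarrow> {u, v} \<in> E"
    using inj_image_mem_iff[OF inj_on_edges[of UNIV], of "{u, v}" E] by simp
  moreover have "f u \<noteq> f v \<longleftrightarrow> u \<noteq> v"
    using inj by (auto dest: injD)
  ultimately show ?thesis
    unfolding adj_def by simp
qed

lemma connected_image: "connected_graph Vf Ef"
proof -
  have "graph Vf Ef"
    unfolding graph_def
    using finite_V edge_subset card_edge card_image[OF inj_on_subset[OF inj]] by auto
  moreover have "(adj Ef)\<^sup>*\<^sup>* (f u) (f v)" if "(adj E)\<^sup>*\<^sup>* u v" for u v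
    using that
  proof (induction rule: rtranclp_induct)
    case (step y z)
    then show ?case
      using adj_image by (meson rtranclp.rtrancl_into_rtrancl)
  qed simp
  ultimately show ?thesis
    unfolding connected_graph_def using V_nonempty reachable by blast
qed

sublocale image: network Vf Ef
  by unfold_locales (rule connected_image)

lemma laplacian_image:
  assumes "v \<in> V"
  shows "laplacian Vf Ef \<psi> (f v) = L (\<lambda>x. \<psi> (f x)) v"
proof -
  have "neighbours Vf Ef (f v) = f ` N v"
    unfolding neighbours_def using adj_image by auto
  then show ?thesis
    unfolding laplacian_def by (simp add: sum.reindex inj_on_subset[OF inj])
qed

lemma degree_image: "Defs.degree Ef (f v) = Defs.degree E v"
proof -
  have "{e \<in> Ef. f v \<in> e} = (\<lambda>e. f ` e) ` {e \<in> E. v \<in> e}"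
    using inj_image_mem_iff[OF inj] by blast
  then show ?thesis
    unfolding Defs.degree_def by (simp add: card_image inj_on_edges)
qed

lemma resistance_image:
  assumes i: "i \<in> V" and j: "j \<in> V"
  shows "resistance Vf Ef (f i) (f j) = \<Omega> i j"
proof -
  have "(\<Sum>v\<in>V. (if v = i then 1 else 0) - (if v = j then 1 else 0) :: real) = 0"
    using i j finite_V by (simp add: sum_subtractf)
  then obtain \<phi> where \<phi>: "\<forall>v\<in>V. L \<phi> v = (if v = i then 1 else 0) - (if v = j then 1 else 0)"
    using poisson_solvable by blast
  define \<psi> where "\<psi> = \<phi> \<circ> inv_into UNIV f"
  have \<psi>_f: "\<psi> (f x) = \<phi> x" for x
    unfolding \<psi>_def using inj by simp
  have "\<forall>w\<in>Vf. laplacian Vf Ef \<psi> w = (if w = f i then 1 else 0) - (if w = f j then 1 else 0)"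
    using \<phi> inj by (auto simp: laplacian_image \<psi>_f inj_eq)
  then have "resistance Vf Ef (f i) (f j) = \<psi> (f i) - \<psi> (f j)"
    using i j by (intro image.resistance_eqI) auto
  also have "\<dots> = \<Omega> i j"
    using resistance_eqI[OF i j \<phi>] \<psi>_f by simp
  finally show ?thesis .
qed

lemma resistance_form_image:
  "image.resistance_form h k = resistance_form (\<lambda>x. h (f x)) (\<lambda>x. k (f x))"
  unfolding image.resistance_form_def resistance_form_def
  using inj_on_subset[OF inj] by (simp add: sum.reindex resistance_image cong: sum.cong)

lemma indices_image:
  "kirchhoff Vf Ef = kirchhoff V E"
  "add_deg_kirchhoff Vf Ef = add_deg_kirchhoff V E"
  "mult_deg_kirchhoff Vf Ef = mult_deg_kirchhoff V E"
  unfolding image.kirchhoff_eq_form kirchhoff_eq_form image.add_deg_kirchhoff_eq_form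
    add_deg_kirchhoff_eq_form image.mult_deg_kirchhoff_eq_form mult_deg_kirchhoff_eq_form
    resistance_form_image degree_image
  by simp_all

end

section \<open>One subdivision step\<close>

definition dirac :: "'a \<Rightarrow> 'a \<Rightarrow> real" where
  "dirac p r = (if r = p then 1 else 0)"

lemma sum_dirac: "finite A \<Longrightarrow> p \<in> A \<Longrightarrow> (\<Sum>r\<in>A. dirac p r * h r) = h p"
  by (simp add: dirac_def if_distrib[of "\<lambda>x. x * _"] cong: if_cong)

definition mid :: "'a sv set \<Rightarrow> 'a sv" where
  "mid e = Mid (Abs_fset e)"

definition ends :: "'a sv \<Rightarrow> 'a sv set" where
  "ends r = (case r of Mid A \<Rightarrow> fset A | Old _ \<Rightarrow> {})"

lemma ends_mid: "finite e \<Longrightarrow> ends (mid e) = e"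
  unfolding ends_def mid_def by (simp add: Abs_fset_inverse)

lemma mid_inject: "finite e \<Longrightarrow> finite e' \<Longrightarrow> mid e = mid e' \<longleftrightarrow> e = e'"
  using ends_mid by metis

locale subdivision = network V E for V :: "'a sv set" and E +
  assumes mid_notin_V: "e \<in> E \<Longrightarrow> mid e \<notin> V"
begin

definition V' where "V' = V \<union> mid ` E"
definition E' where "E' = {{u, mid e} | u e. e \<in> E \<and> u \<in> e}"

lemma subdiv_eq: "subdiv (V, E) = (V', E')"
  unfolding subdiv_def V'_def E'_def mid_def by simp

lemma inj_on_mid: "inj_on mid E"
  using finite_edge mid_inject by (blast intro: inj_onI)

lemma finite_V': "finite V'"
  unfolding V'_def using finite_V finite_E by simp

lemma sum_V': "(\<Sum>r\<in>V'. h r) = (\<Sum>v\<in>V. h v) + (\<Sum>e\<in>E. h (mid e))"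
proof -
  have "V \<inter> mid ` E = {}"
    using mid_notin_V by blast
  then have "(\<Sum>r\<in>V'. h r) = (\<Sum>v\<in>V. h v) + (\<Sum>r\<in>mid ` E. h r)"
    unfolding V'_def using finite_V finite_E by (simp add: sum.union_disjoint)
  also have "(\<Sum>r\<in>mid ` E. h r) = (\<Sum>e\<in>E. h (mid e))"
    by (simp add: sum.reindex[OF inj_on_mid])
  finally show ?thesis .
qed

lemma card_V': "card V' = card V + card E"
  using sum_V'[of "\<lambda>_. 1 :: nat"] by simp

lemma mid_neq_edge_end: "e \<in> E \<Longrightarrow> e' \<in> E \<Longrightarrow> u \<in> e' \<Longrightarrow> mid e \<noteq> u"
  using mid_notin_V edge_subset by blast

lemma card_E': "card E' = 2 * card E"
proof -
  have "E' = (\<lambda>(e, u). {u, mid e}) ` (SIGMA e:E. e)"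
    unfolding E'_def by auto
  moreover have "inj_on (\<lambda>(e, u). {u, mid e}) (SIGMA e:E. e)"
  proof (rule inj_onI, clarsimp)
    fix e u e' u'
    assume "e \<in> E" "u \<in> e" "e' \<in> E" "u' \<in> e'" "{u, mid e} = {u', mid e'}"
    then have "u = u' \<and> mid e = mid e'"
      using mid_neq_edge_end by (metis doubleton_eq_iff)
    then show "e = e' \<and> u = u'"
      using mid_inject finite_edge \<open>e \<in> E\<close> \<open>e' \<in> E\<close> by blast
  qed
  ultimately have "card E' = card (SIGMA e:E. e)"
    by (simp add: card_image)
  also have "\<dots> = (\<Sum>e\<in>E. card e)"
    using finite_E finite_edge by (simp add: card_SigmaI)
  also have "\<dots> = 2 * card E"
    using card_edge by simp
  finally show ?thesis .
qed

lemma adj_end_mid: "e \<in> E \<Longrightarrow> v \<in> e \<Longrightarrow> adj E' v (mid e)"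
  unfolding adj_def E'_def using mid_neq_edge_end by blast

lemma graph_V'_E': "graph V' E'"
proof -
  have "x \<subseteq> V' \<and> card x = 2" if "x \<in> E'" for x
  proof -
    obtain u e where "e \<in> E" "u \<in> e" "x = {u, mid e}"
      using \<open>x \<in> E'\<close> unfolding E'_def by blast
    moreover have "u \<in> V" "u \<noteq> mid e"
      using calculation edge_subset mid_neq_edge_end by blast+
    ultimately show ?thesis
      unfolding V'_def by auto
  qed
  with finite_V' show ?thesis
    unfolding graph_def by blast
qed

lemma reachable_V': "p \<in> V' \<Longrightarrow> q \<in> V' \<Longrightarrow> (adj E')\<^sup>*\<^sup>* p q"
proof -
  have old: "(adj E')\<^sup>*\<^sup>* u v" if "(adj E)\<^sup>*\<^sup>* u v" for u v
    using that
  proof (induction rule: rtranclp_induct)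
    case (step y z)
    then have "{y, z} \<in> E"
      unfolding adj_def by simp
    then have "adj E' y (mid {y, z})" "adj E' (mid {y, z}) z"
      by (simp_all add: adj_end_mid adj_commute[of E' "mid _"])
    with step.IH show ?case
      by (meson rtranclp.rtrancl_into_rtrancl)
  qed simp
  have near_old: "\<exists>u\<in>V. (adj E')\<^sup>*\<^sup>* p u \<and> (adj E')\<^sup>*\<^sup>* u p" if "p \<in> V'" for p
  proof (cases "p \<in> V")
    case False
    with that obtain e where e: "e \<in> E" "p = mid e"
      unfolding V'_def by blast
    then have "card e = 2"
      using card_edge by blast
    then obtain a b where "e = {a, b}"
      unfolding card_2_iff by blast
    then have "a \<in> e" "a \<in> V"
      using edge_subset e by auto
    with e have "adj E' a p" "adj E' p a"
      by (simp_all add: adj_end_mid adj_commute[of E' "mid e"])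
    with \<open>a \<in> V\<close> show ?thesis
      by blast
  qed blast
  assume "p \<in> V'" "q \<in> V'"
  with near_old obtain u w where "u \<in> V" "(adj E')\<^sup>*\<^sup>* p u" "w \<in> V" "(adj E')\<^sup>*\<^sup>* w q"
    by metis
  moreover have "(adj E')\<^sup>*\<^sup>* u w"
    using old reachable calculation by blast
  ultimately show "(adj E')\<^sup>*\<^sup>* p q"
    by (meson rtranclp_trans)
qed

lemma connected_V'_E': "connected_graph V' E'"
  unfolding connected_graph_def using graph_V'_E' reachable_V' V_nonempty
  unfolding V'_def by blast

sublocale S: network V' E'
  by unfold_locales (rule connected_V'_E')

lemma mem_E': "x \<in> E' \<longleftrightarrow> (\<exists>u e. e \<in> E \<and> u \<in> e \<and> x = {u, mid e})"
  unfolding E'_def by blast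

lemma neighbours_old:
  assumes "v \<in> V"
  shows "S.N v = mid ` {e\<in>E. v \<in> e}"
proof (intro equalityI subsetI)
  fix q assume "q \<in> S.N v"
  then obtain u e where ue: "e \<in> E" "u \<in> e" "{v, q} = {u, mid e}"
    unfolding neighbours_def adj_def mem_E' by blast
  moreover have "v \<noteq> mid e"
    using assms mid_notin_V ue(1) by blast
  ultimately have "v = u" "q = mid e"
    by (auto simp: doubleton_eq_iff)
  with ue show "q \<in> mid ` {e\<in>E. v \<in> e}"
    by blast
next
  fix q assume "q \<in> mid ` {e\<in>E. v \<in> e}"
  then show "q \<in> S.N v"
    unfolding neighbours_def V'_def using adj_end_mid by blast
qed

lemma neighbours_mid:
  assumes "e \<in> E"
  shows "S.N (mid e) = e"
proof (intro equalityI subsetI)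
  fix q assume "q \<in> S.N (mid e)"
  then obtain u e' where ue: "e' \<in> E" "u \<in> e'" "{mid e, q} = {u, mid e'}"
    unfolding neighbours_def adj_def mem_E' by blast
  moreover have "mid e \<noteq> u"
    using assms ue mid_neq_edge_end by blast
  ultimately have "mid e = mid e'" "q = u"
    by (auto simp: doubleton_eq_iff)
  moreover have "e = e'"
    using mid_inject[OF finite_edge[OF assms] finite_edge[OF ue(1)]] \<open>mid e = mid e'\<close> by simp
  ultimately show "q \<in> e"
    using ue(2) by simp
next
  fix q assume "q \<in> e"
  then have "adj E' (mid e) q"
    using assms adj_end_mid adj_commute[of E' "mid e"] by simp
  with \<open>q \<in> e\<close> show "q \<in> S.N (mid e)"
    unfolding neighbours_def V'_def using assms edge_subset by blast
qed

lemma degree_old: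
  assumes "v \<in> V"
  shows "Defs.degree E' v = Defs.degree E v"
proof -
  have "Defs.degree E' v = card (mid ` {e\<in>E. v \<in> e})"
    using S.degree_eq_card_neighbours[of v] neighbours_old[OF assms] assms
    unfolding V'_def by simp
  also have "\<dots> = Defs.degree E v"
    unfolding Defs.degree_def using inj_on_subset[OF inj_on_mid] by (simp add: card_image)
  finally show ?thesis .
qed

lemma degree_mid:
  assumes "e \<in> E"
  shows "Defs.degree E' (mid e) = 2"
proof -
  have "mid e \<in> V'"
    unfolding V'_def using assms by blast
  then show ?thesis
    using S.degree_eq_card_neighbours neighbours_mid[OF assms] card_edge[OF assms] by simp
qed

text \<open>Current injected at a subdivision vertex splits evenly between the two ends of its edge.\<close>
definition push :: "('a sv \<Rightarrow> real) \<Rightarrow> 'a sv \<Rightarrow> real" where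
  "push \<beta> v = \<beta> v + (\<Sum>e\<in>{e\<in>E. v \<in> e}. \<beta> (mid e)) / 2"

text \<open>Each edge of G becomes two unit resistors in series, which doubles potentials; a
  subdivision vertex sits at the mean potential of its ends, shifted by half the current
  injected there.\<close>
definition lift :: "('a sv \<Rightarrow> real) \<Rightarrow> ('a sv \<Rightarrow> real) \<Rightarrow> 'a sv \<Rightarrow> real" where
  "lift \<phi> \<beta> r = (if r \<in> V then 2 * \<phi> r else (\<Sum>u\<in>ends r. \<phi> u) + \<beta> r / 2)"

lemma laplacian_lift_old:
  assumes "v \<in> V" "L \<phi> v = push \<beta> v"
  shows "S.L (lift \<phi> \<beta>) v = \<beta> v"
proof -
  have "S.L (lift \<phi> \<beta>) v = (\<Sum>e\<in>{e\<in>E. v \<in> e}. lift \<phi> \<beta> v - lift \<phi> \<beta> (mid e))"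
    unfolding laplacian_def neighbours_old[OF assms(1)]
    using inj_on_subset[OF inj_on_mid] by (simp add: sum.reindex)
  also have "\<dots> = (\<Sum>e\<in>{e\<in>E. v \<in> e}. 2 * \<phi> v - ((\<Sum>u\<in>e. \<phi> u) + \<beta> (mid e) / 2))"
    using assms(1) mid_notin_V by (intro sum.cong) (auto simp: lift_def ends_mid finite_edge)
  also have "\<dots> = (\<Sum>u\<in>N v. 2 * \<phi> v - ((\<Sum>w\<in>{v, u}. \<phi> w) + \<beta> (mid {v, u}) / 2))"
    by (rule sum_incident_edges[OF assms(1)])
  also have "\<dots> = (\<Sum>u\<in>N v. (\<phi> v - \<phi> u) - \<beta> (mid {v, u}) / 2)"
    by (intro sum.cong) (auto simp: neighbours_def adj_def)
  also have "\<dots> = L \<phi> v - (\<Sum>e\<in>{e\<in>E. v \<in> e}. \<beta> (mid e)) / 2"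
    unfolding laplacian_def sum_incident_edges[OF assms(1)]
    by (simp add: sum_subtractf sum_divide_distrib)
  finally show ?thesis
    using assms(2) unfolding push_def by simp
qed

lemma laplacian_lift_mid:
  assumes "e \<in> E"
  shows "S.L (lift \<phi> \<beta>) (mid e) = \<beta> (mid e)"
proof -
  have "S.L (lift \<phi> \<beta>) (mid e) = (\<Sum>u\<in>e. ((\<Sum>w\<in>e. \<phi> w) + \<beta> (mid e) / 2) - 2 * \<phi> u)"
    unfolding laplacian_def neighbours_mid[OF assms]
    using assms mid_notin_V edge_subset
    by (intro sum.cong) (auto simp: lift_def ends_mid finite_edge)
  also have "\<dots> = \<beta> (mid e)"
    using card_edge[OF assms] by (simp add: sum_subtractf sum_distrib_left[symmetric])
  finally show ?thesis .
qed

lemma laplacian_lift: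
  assumes "\<forall>v\<in>V. L \<phi> v = push \<beta> v" and "r \<in> V'"
  shows "S.L (lift \<phi> \<beta>) r = \<beta> r"
  using assms laplacian_lift_old laplacian_lift_mid unfolding V'_def by blast

lemma sum_push: "(\<Sum>v\<in>V. push \<beta> v) = (\<Sum>r\<in>V'. \<beta> r)"
proof -
  have "(\<Sum>v\<in>V. \<Sum>e\<in>{e\<in>E. v \<in> e}. \<beta> (mid e)) = (\<Sum>e\<in>E. \<Sum>v\<in>e. \<beta> (mid e))"
    by (rule sum_edges_swap[symmetric])
  also have "\<dots> = 2 * (\<Sum>e\<in>E. \<beta> (mid e))"
    using card_edge by (simp add: sum_distrib_left)
  finally show ?thesis
    unfolding push_def sum_V' by (simp add: sum.distrib sum_divide_distrib[symmetric])
qed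

lemma sum_mult_lift:
  "(\<Sum>r\<in>V'. \<beta> r * lift \<phi> \<beta> r)
    = 2 * (\<Sum>v\<in>V. push \<beta> v * \<phi> v) + (\<Sum>e\<in>E. \<beta> (mid e) ^ 2) / 2"
proof -
  have "(\<Sum>e\<in>E. \<beta> (mid e) * lift \<phi> \<beta> (mid e))
      = (\<Sum>e\<in>E. \<Sum>u\<in>e. \<beta> (mid e) * \<phi> u) + (\<Sum>e\<in>E. \<beta> (mid e) ^ 2) / 2"
    using mid_notin_V
    by (simp add: lift_def ends_mid finite_edge sum_distrib_left distrib_left power2_eq_square
        sum.distrib sum_divide_distrib)
  also have "(\<Sum>e\<in>E. \<Sum>u\<in>e. \<beta> (mid e) * \<phi> u) = (\<Sum>v\<in>V. (\<Sum>e\<in>{e\<in>E. v \<in> e}. \<beta> (mid e)) * \<phi> v)"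
    unfolding sum_edges_swap by (simp add: sum_distrib_right)
  finally have mid_part: "(\<Sum>e\<in>E. \<beta> (mid e) * lift \<phi> \<beta> (mid e))
      = (\<Sum>v\<in>V. (\<Sum>e\<in>{e\<in>E. v \<in> e}. \<beta> (mid e)) * \<phi> v) + (\<Sum>e\<in>E. \<beta> (mid e) ^ 2) / 2" .
  have "(\<Sum>v\<in>V. \<beta> v * lift \<phi> \<beta> v) = (\<Sum>v\<in>V. 2 * (\<beta> v * \<phi> v))"
    by (intro sum.cong) (auto simp: lift_def)
  moreover have "2 * (\<Sum>v\<in>V. push \<beta> v * \<phi> v)
      = (\<Sum>v\<in>V. 2 * (\<beta> v * \<phi> v)) + (\<Sum>v\<in>V. (\<Sum>e\<in>{e\<in>E. v \<in> e}. \<beta> (mid e)) * \<phi> v)"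
    unfolding sum_distrib_left sum.distrib[symmetric] by (intro sum.cong) (simp_all add: push_def algebra_simps)
  ultimately show ?thesis
    unfolding sum_V' mid_part by simp
qed


definition offset :: "'a sv \<Rightarrow> real" where
  "offset p = (if p \<in> V then 0 else 1/2) - resistance_form (push (dirac p)) (push (dirac p))"

lemma sum_edges_dirac:
  assumes "p \<in> V'"
  shows "(\<Sum>e\<in>E. dirac p (mid e) * h (mid e)) = (if p \<in> V then 0 else h p)"
proof -
  have "(\<Sum>e\<in>E. dirac p (mid e) * h (mid e)) = (\<Sum>r\<in>mid ` E. dirac p r * h r)"
    by (simp add: sum.reindex[OF inj_on_mid])
  also have "\<dots> = (if p \<in> mid ` E then h p else 0)"
    using finite_E by (simp add: dirac_def if_distrib[of "\<lambda>x. x * _"] eq_commute cong: if_cong)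
  also have "\<dots> = (if p \<in> V then 0 else h p)"
    using assms mid_notin_V unfolding V'_def by auto
  finally show ?thesis .
qed

lemma push_dirac_old:
  assumes "p \<in> V"
  shows "push (dirac p) v = dirac p v"
proof -
  have "(\<Sum>e\<in>{e\<in>E. v \<in> e}. dirac p (mid e)) = 0"
    using assms mid_notin_V by (intro sum.neutral) (auto simp: dirac_def)
  then show ?thesis
    unfolding push_def by simp
qed

lemma push_dirac_mid:
  assumes "e \<in> E" "v \<in> V"
  shows "push (dirac (mid e)) v = (if v \<in> e then 1/2 else 0)"
proof -
  have "(\<Sum>e'\<in>{e'\<in>E. v \<in> e'}. dirac (mid e) (mid e'))
      = (\<Sum>e'\<in>{e'\<in>E. v \<in> e'}. if e' = e then 1 else 0)"
    using assms finite_edge mid_inject by (intro sum.cong) (auto simp: dirac_def)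
  also have "\<dots> = (if v \<in> e then 1 else 0)"
    using assms finite_E by simp
  finally show ?thesis
    unfolding push_def using assms mid_notin_V edge_subset by (auto simp: dirac_def)
qed

lemma push_sum: "push (\<lambda>r. \<Sum>p\<in>P. a p * f p r) v = (\<Sum>p\<in>P. a p * push (f p) v)"
  unfolding push_def
  by (simp add: sum.distrib sum_divide_distrib sum_distrib_left distrib_left sum.swap[of _ P])

lemma push_cong: "(\<And>r. r \<in> V' \<Longrightarrow> \<alpha> r = \<alpha>' r) \<Longrightarrow> v \<in> V \<Longrightarrow> push \<alpha> v = push \<alpha>' v"
  unfolding push_def V'_def by simp

lemma push_eq_sum_dirac:
  assumes "v \<in> V"
  shows "push \<alpha> v = (\<Sum>p\<in>V'. \<alpha> p * push (dirac p) v)"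
proof -
  have "push \<alpha> v = push (\<lambda>r. \<Sum>p\<in>V'. \<alpha> p * dirac p r) v"
    using assms finite_V'
    by (intro push_cong) (simp_all add: dirac_def if_distrib[of "\<lambda>x. _ * x"] cong: if_cong)
  then show ?thesis
    by (simp only: push_sum)
qed


lemma sum_edges_dirac_diff_square:
  assumes "p \<in> V'" "q \<in> V'"
  shows "(\<Sum>e\<in>E. (dirac p (mid e) - dirac q (mid e))\<^sup>2)
    = (if p \<in> V then 0 else 1) + (if q \<in> V then 0 else 1) - 2 * (if p = q \<and> p \<notin> V then 1 else 0)"
proof -
  have "(\<Sum>e\<in>E. (dirac p (mid e) - dirac q (mid e))\<^sup>2)
      = (\<Sum>e\<in>E. dirac p (mid e) * 1 + dirac q (mid e) * 1 - 2 * (dirac p (mid e) * dirac q (mid e)))"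
    by (intro sum.cong) (auto simp: dirac_def power2_eq_square)
  also have "\<dots> = (\<Sum>e\<in>E. dirac p (mid e) * 1) + (\<Sum>e\<in>E. dirac q (mid e) * 1)
      - 2 * (\<Sum>e\<in>E. dirac p (mid e) * dirac q (mid e))"
    by (simp only: sum.distrib sum_subtractf sum_distrib_left[symmetric])
  also have "\<dots> = (if p \<in> V then 0 else 1) + (if q \<in> V then 0 else 1) - 2 * (if p \<in> V then 0 else dirac q p)"
    by (simp only: sum_edges_dirac[OF assms(1), of "\<lambda>_. 1"] sum_edges_dirac[OF assms(2), of "\<lambda>_. 1"]
        sum_edges_dirac[OF assms(1), of "dirac q"])
  finally show ?thesis
    by (simp add: dirac_def)
qed

theorem resistance_subdivision:
  assumes p: "p \<in> V'" and q: "q \<in> V'"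
  shows "S.\<Omega> p q = 2 * resistance_form (push (dirac p)) (push (dirac q))
    - (if p = q \<and> p \<notin> V then 1 else 0) + offset p + offset q"
proof -
  define \<beta> where "\<beta> r = dirac p r - dirac q r" for r
  have "push \<beta> = (\<lambda>v. push (dirac p) v - push (dirac q) v)"
    unfolding push_def \<beta>_def sum_subtractf by (auto simp: diff_divide_distrib)
  then have form_\<beta>: "resistance_form (push \<beta>) (push \<beta>) = resistance_form (push (dirac p)) (push (dirac p))
      - 2 * resistance_form (push (dirac p)) (push (dirac q)) + resistance_form (push (dirac q)) (push (dirac q))"
    by (simp add: resistance_form_diff)
  have square_\<beta>: "(\<Sum>e\<in>E. \<beta> (mid e) ^ 2)
      = (if p \<in> V then 0 else 1) + (if q \<in> V then 0 else 1) - 2 * (if p = q \<and> p \<notin> V then 1 else 0)"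
    unfolding \<beta>_def by (rule sum_edges_dirac_diff_square[OF p q])
  have "(\<Sum>v\<in>V. push \<beta> v) = 0"
    unfolding sum_push \<beta>_def sum_subtractf
    using sum_dirac[OF finite_V' p, of "\<lambda>_. 1"] sum_dirac[OF finite_V' q, of "\<lambda>_. 1"] by simp
  then obtain \<phi> where \<phi>: "\<forall>v\<in>V. L \<phi> v = push \<beta> v"
    using poisson_solvable by blast
  have "\<forall>r\<in>V'. S.L (lift \<phi> \<beta>) r = (if r = p then 1 else 0) - (if r = q then 1 else 0)"
    using laplacian_lift[OF \<phi>] unfolding \<beta>_def dirac_def by simp
  then have "S.\<Omega> p q = lift \<phi> \<beta> p - lift \<phi> \<beta> q"
    by (rule S.resistance_eqI[OF p q])
  also have "\<dots> = (\<Sum>r\<in>V'. \<beta> r * lift \<phi> \<beta> r)"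
    unfolding \<beta>_def left_diff_distrib sum_subtractf sum_dirac[OF finite_V' p] sum_dirac[OF finite_V' q] ..
  also have "\<dots> = - resistance_form (push \<beta>) (push \<beta>) + (\<Sum>e\<in>E. \<beta> (mid e) ^ 2) / 2"
    unfolding sum_mult_lift potential_energy[OF \<open>(\<Sum>v\<in>V. push \<beta> v) = 0\<close> \<phi>] by simp
  finally show ?thesis
    unfolding form_\<beta> square_\<beta> offset_def by simp
qed

lemma sum_diagonal_mid:
  fixes \<alpha> \<gamma> :: "'a sv \<Rightarrow> real"
  shows "(\<Sum>p\<in>V'. \<Sum>q\<in>V'. \<alpha> p * \<gamma> q * (if p = q \<and> p \<notin> V then 1 else 0))
    = (\<Sum>e\<in>E. \<alpha> (mid e) * \<gamma> (mid e))"
proof -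
  have "(\<Sum>q\<in>V'. \<alpha> p * \<gamma> q * (if p = q \<and> p \<notin> V then 1 else 0))
      = (if p \<in> V then 0 else \<alpha> p * \<gamma> p)" if "p \<in> V'" for p
  proof -
    have "(\<Sum>q\<in>V'. \<alpha> p * \<gamma> q * (if p = q \<and> p \<notin> V then 1 else 0))
        = (\<Sum>q\<in>V'. if p = q then (if p \<in> V then 0 else \<alpha> p * \<gamma> q) else 0)"
      by (intro sum.cong) auto
    with that finite_V' show ?thesis
      by simp
  qed
  then have "(\<Sum>p\<in>V'. \<Sum>q\<in>V'. \<alpha> p * \<gamma> q * (if p = q \<and> p \<notin> V then 1 else 0))
      = (\<Sum>p\<in>V'. if p \<in> V then 0 else \<alpha> p * \<gamma> p)"
    by (rule sum.cong[OF refl])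
  also have "\<dots> = (\<Sum>e\<in>E. \<alpha> (mid e) * \<gamma> (mid e))"
    unfolding sum_V' using mid_notin_V by simp
  finally show ?thesis .
qed

lemma resistance_form_push:
  "resistance_form (push \<alpha>) (push \<gamma>)
    = (\<Sum>p\<in>V'. \<Sum>q\<in>V'. \<alpha> p * \<gamma> q * resistance_form (push (dirac p)) (push (dirac q)))"
proof -
  have "resistance_form (push \<alpha>) (push \<gamma>)
      = resistance_form (\<lambda>x. \<Sum>p\<in>V'. \<alpha> p * push (dirac p) x) (\<lambda>y. \<Sum>q\<in>V'. \<gamma> q * push (dirac q) y)"
    by (intro resistance_form_cong push_eq_sum_dirac)
  then show ?thesis
    by (simp only: resistance_form_sum)
qed

theorem resistance_form_subdivision:
  "S.resistance_form \<alpha> \<gamma>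
    = 2 * resistance_form (push \<alpha>) (push \<gamma>) - (\<Sum>e\<in>E. \<alpha> (mid e) * \<gamma> (mid e))
      + (\<Sum>p\<in>V'. \<alpha> p * offset p) * (\<Sum>q\<in>V'. \<gamma> q) + (\<Sum>p\<in>V'. \<alpha> p) * (\<Sum>q\<in>V'. \<gamma> q * offset q)"
proof -
  have "(\<Sum>p\<in>V'. \<Sum>q\<in>V'. \<alpha> p * \<gamma> q * S.\<Omega> p q)
      = (\<Sum>p\<in>V'. \<Sum>q\<in>V'. 2 * (\<alpha> p * \<gamma> q * resistance_form (push (dirac p)) (push (dirac q)))
          - \<alpha> p * \<gamma> q * (if p = q \<and> p \<notin> V then 1 else 0)
          + (\<alpha> p * offset p) * \<gamma> q + \<alpha> p * (\<gamma> q * offset q))"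
    by (intro sum.cong refl) (simp add: resistance_subdivision algebra_simps)
  also have "\<dots> = 2 * (\<Sum>p\<in>V'. \<Sum>q\<in>V'. \<alpha> p * \<gamma> q * resistance_form (push (dirac p)) (push (dirac q)))
      - (\<Sum>p\<in>V'. \<Sum>q\<in>V'. \<alpha> p * \<gamma> q * (if p = q \<and> p \<notin> V then 1 else 0))
      + (\<Sum>p\<in>V'. \<Sum>q\<in>V'. (\<alpha> p * offset p) * \<gamma> q)
      + (\<Sum>p\<in>V'. \<Sum>q\<in>V'. \<alpha> p * (\<gamma> q * offset q))"
    by (simp only: sum.distrib sum_subtractf sum_distrib_left)
  finally show ?thesis
    unfolding S.resistance_form_def resistance_form_push[of \<alpha> \<gamma>] sum_diagonal_mid sum_product .
qed

lemma offset_old: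
  assumes "p \<in> V"
  shows "offset p = 0"
proof -
  have "resistance_form (push (dirac p)) (push (dirac p)) = resistance_form (dirac p) (dirac p)"
    using assms push_dirac_old by (intro resistance_form_cong) simp_all
  also have "\<dots> = (\<Sum>x\<in>V. dirac p x * (\<Sum>y\<in>V. dirac p y * \<Omega> x y))"
    unfolding resistance_form_def by (simp add: sum_distrib_left mult.assoc)
  also have "\<dots> = \<Omega> p p"
    using assms finite_V by (simp add: sum_dirac)
  finally show ?thesis
    unfolding offset_def using assms resistance_self by simp
qed

lemma offset_mid:
  assumes "e \<in> E"
  shows "offset (mid e) = 1/2 - (\<Sum>x\<in>e. \<Sum>y\<in>e. \<Omega> x y) / 4"
proof -
  have restrict: "(\<Sum>x\<in>V. if x \<in> e then h x else 0) = (\<Sum>x\<in>e. h x)" for h :: "'a sv \<Rightarrow> real"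
  proof -
    have "{x\<in>V. x \<in> e} = e"
      using edge_subset[OF assms] by blast
    then show ?thesis
      using sum.inter_filter[OF finite_V] by metis
  qed
  have "resistance_form (push (dirac (mid e))) (push (dirac (mid e)))
      = resistance_form (\<lambda>x. if x \<in> e then 1/2 else 0) (\<lambda>x. if x \<in> e then 1/2 else 0)"
    using assms push_dirac_mid by (intro resistance_form_cong) simp_all
  also have "\<dots> = (\<Sum>x\<in>V. if x \<in> e then (\<Sum>y\<in>V. if y \<in> e then \<Omega> x y / 4 else 0) else 0)"
    unfolding resistance_form_def by (auto intro!: sum.cong)
  also have "\<dots> = (\<Sum>x\<in>e. \<Sum>y\<in>e. \<Omega> x y) / 4"
    unfolding restrict by (simp add: sum_divide_distrib)
  finally show ?thesis
    unfolding offset_def using assms mid_notin_V by simp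
qed

lemma sum_offset:
  "(\<Sum>p\<in>V'. \<alpha> p * offset p) = (\<Sum>e\<in>E. \<alpha> (mid e) * (1/2 - (\<Sum>x\<in>e. \<Sum>y\<in>e. \<Omega> x y) / 4))"
  unfolding sum_V' by (simp add: offset_old offset_mid)

lemma push_one: "push (\<lambda>_. 1) v = 1 + deg v / 2"
  unfolding push_def Defs.degree_def by simp

lemma push_deg: "v \<in> V \<Longrightarrow> push S.deg v = 2 * deg v"
  unfolding push_def using degree_old degree_mid by (simp add: Defs.degree_def)

lemma sum_deg_V': "(\<Sum>p\<in>V'. S.deg p) = 4 * real (card E)"
  unfolding sum_V' using sum_degree by (simp add: degree_old degree_mid)

text \<open>The factor 1 keeps the shape of the weight-1 instance of the sums in
  resistance_form_subdivision, so that the lemma can be used to rewrite them.\<close>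
lemma sum_offset_one: "(\<Sum>p\<in>V'. 1 * offset p) = (real (card E) - real (card V) + 1) / 2"
proof -
  have "(\<Sum>p\<in>V'. 1 * offset p) = (\<Sum>e\<in>E. 1/2 - (\<Sum>x\<in>e. \<Sum>y\<in>e. \<Omega> x y) / 4)"
    using sum_offset[of "\<lambda>_. 1"] by simp
  also have "\<dots> = real (card E) / 2 - (\<Sum>e\<in>E. \<Sum>x\<in>e. \<Sum>y\<in>e. \<Omega> x y) / 4"
    by (simp add: sum_subtractf sum_divide_distrib)
  finally show ?thesis
    unfolding foster by (simp add: field_simps)
qed

lemma sum_deg_offset: "(\<Sum>p\<in>V'. S.deg p * offset p) = real (card E) - real (card V) + 1"
proof -
  have "(\<Sum>p\<in>V'. S.deg p * offset p) = (\<Sum>e\<in>E. 1 - (\<Sum>x\<in>e. \<Sum>y\<in>e. \<Omega> x y) / 2)"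
    unfolding sum_offset by (intro sum.cong) (simp_all add: degree_mid algebra_simps)
  also have "\<dots> = real (card E) - (\<Sum>e\<in>E. \<Sum>x\<in>e. \<Sum>y\<in>e. \<Omega> x y) / 2"
    by (simp add: sum_subtractf sum_divide_distrib)
  finally show ?thesis
    unfolding foster by (simp add: field_simps)
qed

theorem indices_subdivision:
  defines "n \<equiv> real (card V)" and "m \<equiv> real (card E)"
  shows "kirchhoff V' E' = 2 * kirchhoff V E + add_deg_kirchhoff V E + mult_deg_kirchhoff V E / 2
      + (m * m - n * n + n) / 2"
    and "add_deg_kirchhoff V' E' = 4 * add_deg_kirchhoff V E + 4 * mult_deg_kirchhoff V E
      + (3 * m * m - 2 * m * n - n * n + m + n)"
    and "mult_deg_kirchhoff V' E' = 8 * mult_deg_kirchhoff V E + 2 * m * (2 * m - 2 * n + 1)"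
proof -
  have one: "resistance_form (push (\<lambda>_. 1)) h = resistance_form (\<lambda>x. 1 + 1/2 * deg x) h" for h
    by (intro resistance_form_cong) (simp_all add: push_one)
  have degs: "resistance_form (push S.deg) h = resistance_form (\<lambda>x. 0 + 2 * deg x) h" for h
    by (intro resistance_form_cong) (simp_all add: push_deg)
  have "resistance_form (\<lambda>x. 1 + 1/2 * deg x) (push (\<lambda>_. 1)) = resistance_form (\<lambda>x. 1 + 1/2 * deg x) (\<lambda>y. 1 + 1/2 * deg y)"
    "resistance_form (\<lambda>x. 0 + 2 * deg x) (push (\<lambda>_. 1)) = resistance_form (\<lambda>x. 0 + 2 * deg x) (\<lambda>y. 1 + 1/2 * deg y)"
    "resistance_form (\<lambda>x. 0 + 2 * deg x) (push S.deg) = resistance_form (\<lambda>x. 0 + 2 * deg x) (\<lambda>y. 0 + 2 * deg y)"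
    by (intro resistance_form_cong; simp add: push_one push_deg)+
  note forms = one degs this resistance_form_affine kirchhoff_eq_form add_deg_kirchhoff_eq_form
    mult_deg_kirchhoff_eq_form
  note sums = sum_deg_V' sum_offset_one sum_deg_offset
  show "kirchhoff V' E' = 2 * kirchhoff V E + add_deg_kirchhoff V E + mult_deg_kirchhoff V E / 2
      + (m * m - n * n + n) / 2"
    unfolding S.kirchhoff_eq_form resistance_form_subdivision forms sums
    by (simp add: n_def m_def card_V' degree_mid field_simps)
  show "add_deg_kirchhoff V' E' = 4 * add_deg_kirchhoff V E + 4 * mult_deg_kirchhoff V E
      + (3 * m * m - 2 * m * n - n * n + m + n)"
    unfolding S.add_deg_kirchhoff_eq_form resistance_form_subdivision forms sums
    by (simp add: n_def m_def card_V' degree_mid field_simps)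
  show "mult_deg_kirchhoff V' E' = 8 * mult_deg_kirchhoff V E + 2 * m * (2 * m - 2 * n + 1)"
    unfolding S.mult_deg_kirchhoff_eq_form resistance_form_subdivision forms sums
    by (simp add: n_def m_def card_V' degree_mid field_simps)
qed
end


section \<open>Iterated subdivision\<close>

primrec rank :: "'a sv \<Rightarrow> nat" where
  "rank (Old a) = 0"
| "rank (Mid A) = Suc (Max (insert 0 (fset (fimage rank A))))"

text \<open>Holds for S^k(G); it makes the vertices created by the next subdivision, of rank k + 1,
  fresh.\<close>
definition ranked :: "nat \<Rightarrow> 'a sv set \<Rightarrow> 'a sv set set \<Rightarrow> bool" where
  "ranked k V E \<longleftrightarrow> (\<forall>v\<in>V. rank v \<le> k) \<and> (\<forall>e\<in>E. \<exists>u\<in>e. rank u = k)"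

lemma rank_mid:
  assumes "finite e" "\<forall>u\<in>e. rank u \<le> k" "\<exists>u\<in>e. rank u = k"
  shows "rank (mid e) = Suc k"
proof -
  have "Max (insert 0 (rank ` e)) = k"
    using assms by (intro Max_eqI) auto
  then show ?thesis
    unfolding mid_def using assms(1) by (simp add: Abs_fset_inverse)
qed

lemma subdivision_if_ranked:
  assumes "connected_graph V E" "ranked k V E"
  shows "subdivision V E"
proof -
  interpret network V E
    by unfold_locales (rule assms(1))
  have "rank (mid e) = Suc k" if "e \<in> E" for e
    using assms(2) that edge_subset finite_edge unfolding ranked_def
    by (intro rank_mid) (auto simp: subset_iff)
  then show ?thesis
    using assms(2) unfolding ranked_def by unfold_locales (auto intro: assms(1))
qed

lemma (in subdivision) ranked_subdivision:
  assumes "ranked k V E"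
  shows "ranked (Suc k) V' E'"
proof -
  have "rank (mid e) = Suc k" if "e \<in> E" for e
    using assms that edge_subset finite_edge unfolding ranked_def
    by (intro rank_mid) (auto simp: subset_iff)
  then show ?thesis
    using assms unfolding ranked_def V'_def E'_def by fastforce
qed

lemma iter_subdiv_0: "iter_subdiv 0 V E = (Old ` V, (\<lambda>e. Old ` e) ` E)"
  unfolding iter_subdiv_def embed_def by simp

lemma iter_subdiv_Suc: "iter_subdiv (Suc k) V E = subdiv (iter_subdiv k V E)"
  unfolding iter_subdiv_def by simp

lemma iter_subdiv_structure:
  assumes "connected_graph V E"
  shows "subdivision (fst (iter_subdiv k V E)) (snd (iter_subdiv k V E))
    \<and> ranked k (fst (iter_subdiv k V E)) (snd (iter_subdiv k V E))
    \<and> real (card (fst (iter_subdiv k V E))) = real (card V) + (2 ^ k - 1) * real (card E)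
    \<and> real (card (snd (iter_subdiv k V E))) = 2 ^ k * real (card E)"
proof (induction k)
  case 0
  interpret network_renaming V E Old
    by unfold_locales (rule assms, simp add: inj_on_def)
  have "ranked 0 Vf Ef"
    unfolding ranked_def using card_edge by (fastforce simp: card_2_iff)
  moreover have "card Vf = card V" "card Ef = card E"
    using inj_on_edges by (simp_all add: card_image inj_on_def)
  ultimately show ?case
    unfolding iter_subdiv_0 using subdivision_if_ranked connected_image by simp
next
  case (Suc k)
  then interpret subdivision "fst (iter_subdiv k V E)" "snd (iter_subdiv k V E)"
    by blast
  have "iter_subdiv (Suc k) V E = (V', E')"
    unfolding iter_subdiv_Suc using subdiv_eq by simp
  moreover have "ranked (Suc k) V' E'"
    using Suc ranked_subdivision by blast
  ultimately show ?case
    using Suc card_V' card_E' subdivision_if_ranked[OF connected_V'_E']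
    by (simp add: algebra_simps)
qed

lemma iter_subdiv_indices:
  fixes k :: nat
  assumes "connected_graph V E"
  defines "R \<equiv> kirchhoff V E" and "A \<equiv> add_deg_kirchhoff V E" and "M \<equiv> mult_deg_kirchhoff V E"
    and "n \<equiv> real (card V)" and "m \<equiv> real (card E)" and "x \<equiv> (2::real) ^ k"
  shows "kirchhoff (fst (iter_subdiv k V E)) (snd (iter_subdiv k V E))
      = x * R + (x^2 - x) / 2 * A + (x^3 - 2 * x^2 + x) / 4 * M
        + (x^3 - x) / 12 * (m * (2 * m - 2 * n + 1)) - (x^2 - 1) / 6 * ((m - n) * (m - n + 1))
    \<and> add_deg_kirchhoff (fst (iter_subdiv k V E)) (snd (iter_subdiv k V E))
      = x^2 * A + (x^3 - x^2) * M
        + (x^3 - x) / 3 * (m * (2 * m - 2 * n + 1)) - (x^2 - 1) / 3 * ((m - n) * (m - n + 1))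
    \<and> mult_deg_kirchhoff (fst (iter_subdiv k V E)) (snd (iter_subdiv k V E))
      = x^3 * M + (x^3 - x) / 3 * (m * (2 * m - 2 * n + 1))"
  unfolding x_def
proof (induction k)
  case 0
  interpret network_renaming V E Old
    by unfold_locales (rule assms, simp add: inj_on_def)
  show ?case
    unfolding iter_subdiv_0 R_def A_def M_def using indices_image by simp
next
  case (Suc k)
  interpret subdivision "fst (iter_subdiv k V E)" "snd (iter_subdiv k V E)"
    using iter_subdiv_structure[OF assms(1)] by blast
  have "iter_subdiv (Suc k) V E = (V', E')"
    unfolding iter_subdiv_Suc using subdiv_eq by simp
  then show ?case
    using Suc indices_subdivision iter_subdiv_structure[OF assms(1), of k]
    unfolding n_def m_def by (simp add: field_simps power2_eq_square power3_eq_cube)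
qed

theorem theorem3p4:
  fixes V :: "'a set" and E :: "'a set set" and k :: nat
  assumes "connected_graph V E" and "card V \<ge> 2"
  defines "n \<equiv> real (card V)" and "m \<equiv> real (card E)"
  shows "kirchhoff (fst (iter_subdiv k V E)) (snd (iter_subdiv k V E))
    = 2 ^ k * kirchhoff V E
      + (4 ^ k - 2 ^ k) / 2 * add_deg_kirchhoff V E
      + (8 ^ k - 2 * 4 ^ k + 2 ^ k) / 4 * mult_deg_kirchhoff V E
      + (8 ^ k - 2 ^ k) / 12 * (m * (2 * m - 2 * n + 1))
      - (4 ^ k - 1) / 6 * ((m - n) * (m - n + 1))"
proof -
  have "(4::real) ^ k = (2 ^ k)\<^sup>2" "(8::real) ^ k = (2 ^ k) ^ 3"
    by (simp_all add: power2_eq_square power3_eq_cube flip: power_mult_distrib)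
  then show ?thesis
    using iter_subdiv_indices[OF assms(1)] unfolding n_def m_def by simp
qed

end
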